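(* Let $(K_i)_{i\in\mathbb N}$ be number fields with $K_i\subseteq K_{i+1}$ for all $i$ and $\overline{\mathbb Q}=\bigcup_{i}K_i$. For each $i\in\mathbb N$ and each non-Archimedean place $v$ of $K_i$ let $d_i(v)\in\mathbb Q$, and assume $d_i(v)=\sum_{w\in W_v(K_{i+1}/K_i)}d_{i+1}(w)$ for all $i$ and all non-Archimedean places $v$ of $K_i$. Then there exists a unique consistent map $c:\mathcal J\to\mathbb Q$ such that $c(K_i,v)=d_i(v)$ for all $i\in\mathbb N$ and all non-Archimedean places $v$ of $K_i$.
   Context: $\overline{\mathbb Q}$ is an algebraic closure of $\mathbb Q$. For number fields $K\subseteq L$ and a place $v$ of $K$, $W_v(L/K)$ denotes the set of places of $L$ dividing $v$. $\mathcal J$ is the set of pairs $(K,v)$ with $K\subseteq\overline{\mathbb Q}$ a number field and $v$ a non-Archimedean place of $K$. A map $c:\mathcal J\to\mathbb Q$ is consistent if $c(K,v)=\sum_{w\in W_v(L/K)}c(L,w)$ for all number fields $K$, all finite extensions $L/K$, and all non-Archimedean places $v$ of $K$. *)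

theory Defs
  imports Complex_Main "HOL-Computational_Algebra.Polynomial"
begin

definition Qbar :: "complex set" where
  "Qbar = {z. algebraic z}"

definition subfield_C :: "complex set \<Rightarrow> bool" where
  "subfield_C K \<longleftrightarrow> 0 \<in> K \<and> 1 \<in> K \<and>
     (\<forall>x\<in>K. \<forall>y\<in>K. x + y \<in> K \<and> x - y \<in> K \<and> x * y \<in> K) \<and>
     (\<forall>x\<in>K. x \<noteq> 0 \<longrightarrow> inverse x \<in> K)"

definition number_field :: "complex set \<Rightarrow> bool" where
  "number_field K \<longleftrightarrow> K \<subseteq> Qbar \<and> subfield_C K \<and>
     (\<exists>B. finite B \<and> B \<subseteq> K \<and>
        (\<forall>x\<in>K. \<exists>q. (\<forall>b\<in>B. q b \<in> \<rat>) \<and> x = (\<Sum>b\<in>B. q b * b)))"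

definition nonarch_abs :: "complex set \<Rightarrow> (complex \<Rightarrow> real) \<Rightarrow> bool" where
  "nonarch_abs K f \<longleftrightarrow> (\<forall>x. x \<notin> K \<longrightarrow> f x = 0) \<and>
     (\<forall>x\<in>K. f x \<ge> 0 \<and> (f x = 0 \<longleftrightarrow> x = 0)) \<and>
     (\<forall>x\<in>K. \<forall>y\<in>K. f (x * y) = f x * f y \<and> f (x + y) \<le> max (f x) (f y))"

definition nontrivial_abs :: "complex set \<Rightarrow> (complex \<Rightarrow> real) \<Rightarrow> bool" where
  "nontrivial_abs K f \<longleftrightarrow> (\<exists>x\<in>K. x \<noteq> 0 \<and> f x \<noteq> 1)"

definition equiv_abs :: "complex set \<Rightarrow> (complex \<Rightarrow> real) \<Rightarrow> (complex \<Rightarrow> real) \<Rightarrow> bool" where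
  "equiv_abs K f g \<longleftrightarrow> (\<exists>s>0. \<forall>x\<in>K. g x = f x powr s)"

definition nonarch_places :: "complex set \<Rightarrow> (complex \<Rightarrow> real) set set" where
  "nonarch_places K = {{g. nonarch_abs K g \<and> equiv_abs K f g} | f.
      nonarch_abs K f \<and> nontrivial_abs K f}"

definition restrict_abs :: "complex set \<Rightarrow> (complex \<Rightarrow> real) \<Rightarrow> (complex \<Rightarrow> real)" where
  "restrict_abs K f = (\<lambda>x. if x \<in> K then f x else 0)"

definition W :: "complex set \<Rightarrow> complex set \<Rightarrow> (complex \<Rightarrow> real) set \<Rightarrow> (complex \<Rightarrow> real) set set" where
  "W L K v = {w \<in> nonarch_places L. \<exists>f\<in>w. restrict_abs K f \<in> v}"

definition J :: "(complex set \<times> (complex \<Rightarrow> real) set) set" where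
  "J = {(K, v). number_field K \<and> v \<in> nonarch_places K}"

definition consistent :: "(complex set \<Rightarrow> (complex \<Rightarrow> real) set \<Rightarrow> rat) \<Rightarrow> bool" where
  "consistent c \<longleftrightarrow> (\<forall>K L v. number_field K \<longrightarrow> number_field L \<longrightarrow> K \<subseteq> L \<longrightarrow>
      v \<in> nonarch_places K \<longrightarrow> c K v = (\<Sum>w\<in>W L K v. c L w))"

end

theory Submission
  imports Defs
begin

(* For a number field L and a place w of L, choose i with L \<subseteq> K i and put
   c(L, w) = \<Sum> d_i(u) over the places u of K i above w. The places of M above v, for
   K \<subseteq> L \<subseteq> M, are partitioned according to the place of L below them, so such sums are
   transitive; together with the compatibility of d this makes c(L, w) independent of i and
   consistent, and any consistent c' agreeing with d equals c, by consistency for L \<subseteq> K i.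
   All sums are finite: by weak approximation the places of L above a place v can be separated by
   elements of L, and separating elements are linearly independent over Q once the absolute values
   are normalised to agree on K, so there are at most [L : Q] such places. *)

lemma nonarch_abs_outside: "nonarch_abs K f \<Longrightarrow> x \<notin> K \<Longrightarrow> f x = 0"
  unfolding nonarch_abs_def by auto

lemma nonarch_abs_nonneg: "nonarch_abs K f \<Longrightarrow> 0 \<le> f x"
  unfolding nonarch_abs_def by (cases "x \<in> K") auto

lemma nonarch_abs_eq_0_iff: "nonarch_abs K f \<Longrightarrow> x \<in> K \<Longrightarrow> f x = 0 \<longleftrightarrow> x = 0"
  unfolding nonarch_abs_def by auto

lemma nonarch_abs_pos: "nonarch_abs K f \<Longrightarrow> x \<in> K \<Longrightarrow> x \<noteq> 0 \<Longrightarrow> 0 < f x"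
  using nonarch_abs_nonneg nonarch_abs_eq_0_iff by (metis less_eq_real_def)

lemma nonarch_abs_mult: "nonarch_abs K f \<Longrightarrow> x \<in> K \<Longrightarrow> y \<in> K \<Longrightarrow> f (x * y) = f x * f y"
  unfolding nonarch_abs_def by auto

lemma nonarch_abs_add_le:
  "nonarch_abs K f \<Longrightarrow> x \<in> K \<Longrightarrow> y \<in> K \<Longrightarrow> f (x + y) \<le> max (f x) (f y)"
  unfolding nonarch_abs_def by auto

lemma nonarch_abs_powr:
  assumes f: "nonarch_abs K f" and "0 < t"
  shows "nonarch_abs K (\<lambda>x. f x powr t)"
proof -
  have "f (x + y) powr t \<le> max (f x powr t) (f y powr t)" if "x \<in> K" "y \<in> K" for x y
    using nonarch_abs_add_le[OF f that] nonarch_abs_nonneg[OF f] \<open>0 < t\<close>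
    by (metis le_max_iff_disj less_imp_le powr_mono2)
  then show ?thesis
    using f \<open>0 < t\<close> unfolding nonarch_abs_def by (auto simp: powr_mult)
qed

lemma equiv_abs_refl: "nonarch_abs K f \<Longrightarrow> equiv_abs K f f"
  unfolding equiv_abs_def by (intro exI[of _ 1]) (auto simp: nonarch_abs_nonneg)

lemma equiv_abs_sym:
  assumes "nonarch_abs K f" "equiv_abs K f g"
  shows "equiv_abs K g f"
proof -
  obtain s where "0 < s" "\<forall>x\<in>K. g x = f x powr s"
    using assms(2) unfolding equiv_abs_def by auto
  then show ?thesis
    unfolding equiv_abs_def using nonarch_abs_nonneg[OF assms(1)]
    by (intro exI[of _ "1/s"]) (auto simp: powr_powr)
qed

lemma equiv_abs_trans: "equiv_abs K f g \<Longrightarrow> equiv_abs K g h \<Longrightarrow> equiv_abs K f h"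
  unfolding equiv_abs_def by (metis (no_types) mult_pos_pos powr_powr)

lemma nontrivial_abs_equiv:
  assumes f: "nonarch_abs K f" and "nontrivial_abs K f" "equiv_abs K f g"
  shows "nontrivial_abs K g"
proof -
  obtain x where x: "x \<in> K" "x \<noteq> 0" "f x \<noteq> 1"
    using assms(2) unfolding nontrivial_abs_def by auto
  obtain s where "0 < s" "g x = f x powr s"
    using assms(3) x(1) unfolding equiv_abs_def by auto
  then have "ln (g x) = s * ln (f x)" by simp
  moreover have "ln (f x) \<noteq> 0" using x nonarch_abs_pos[OF f x(1,2)] by simp
  ultimately have "g x \<noteq> 1" using \<open>0 < s\<close> by auto
  then show ?thesis using x unfolding nontrivial_abs_def by auto
qed

definition abs_class :: "complex set \<Rightarrow> (complex \<Rightarrow> real) \<Rightarrow> (complex \<Rightarrow> real) set" where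
  "abs_class K f = {g. nonarch_abs K g \<and> equiv_abs K f g}"

lemma abs_class_in_nonarch_places:
  "nonarch_abs K f \<Longrightarrow> nontrivial_abs K f \<Longrightarrow> abs_class K f \<in> nonarch_places K"
  unfolding nonarch_places_def abs_class_def by blast

lemma self_in_abs_class: "nonarch_abs K f \<Longrightarrow> f \<in> abs_class K f"
  unfolding abs_class_def by (simp add: equiv_abs_refl)

lemma abs_class_eq:
  assumes "nonarch_abs K f" "equiv_abs K f g"
  shows "abs_class K g = abs_class K f"
  using assms equiv_abs_sym equiv_abs_trans unfolding abs_class_def by blast

lemma nonarch_placesE:
  assumes "v \<in> nonarch_places K"
  obtains f where "nonarch_abs K f" "nontrivial_abs K f" "v = abs_class K f"
  using assms unfolding nonarch_places_def abs_class_def by auto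

lemma place_eq_abs_class:
  assumes "v \<in> nonarch_places K" "g \<in> v"
  shows "v = abs_class K g"
  using assms by (metis (mono_tags) abs_class_def abs_class_eq mem_Collect_eq nonarch_placesE)

lemma place_memberD:
  assumes "v \<in> nonarch_places K" "g \<in> v"
  shows "nonarch_abs K g" "nontrivial_abs K g"
  using assms
  by (auto elim!: nonarch_placesE simp: abs_class_def intro: nontrivial_abs_equiv)

lemma place_nonempty:
  assumes "v \<in> nonarch_places K"
  obtains g where "g \<in> v"
  using assms by (metis nonarch_placesE self_in_abs_class)

lemma places_eq_if_common_member:
  "v \<in> nonarch_places K \<Longrightarrow> w \<in> nonarch_places K \<Longrightarrow> g \<in> v \<Longrightarrow> g \<in> w \<Longrightarrow> v = w"
  using place_eq_abs_class by metis

lemma subfield_C_0: "subfield_C K \<Longrightarrow> 0 \<in> K"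
  and subfield_C_1: "subfield_C K \<Longrightarrow> 1 \<in> K"
  and subfield_C_add: "subfield_C K \<Longrightarrow> x \<in> K \<Longrightarrow> y \<in> K \<Longrightarrow> x + y \<in> K"
  and subfield_C_diff: "subfield_C K \<Longrightarrow> x \<in> K \<Longrightarrow> y \<in> K \<Longrightarrow> x - y \<in> K"
  and subfield_C_mult: "subfield_C K \<Longrightarrow> x \<in> K \<Longrightarrow> y \<in> K \<Longrightarrow> x * y \<in> K"
  unfolding subfield_C_def by auto

lemma subfield_C_inverse: "subfield_C K \<Longrightarrow> x \<in> K \<Longrightarrow> inverse x \<in> K"
  unfolding subfield_C_def by (cases "x = 0") auto

lemma subfield_C_uminus: "subfield_C K \<Longrightarrow> x \<in> K \<Longrightarrow> - x \<in> K"
  using subfield_C_diff[of K 0 x] subfield_C_0 by simp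

lemma subfield_C_divide: "subfield_C K \<Longrightarrow> x \<in> K \<Longrightarrow> y \<in> K \<Longrightarrow> x / y \<in> K"
  unfolding divide_inverse by (intro subfield_C_mult subfield_C_inverse)

lemma subfield_C_power: "subfield_C K \<Longrightarrow> x \<in> K \<Longrightarrow> x ^ n \<in> K"
  by (induction n) (auto intro: subfield_C_1 subfield_C_mult)

lemma subfield_C_power_int: "subfield_C K \<Longrightarrow> x \<in> K \<Longrightarrow> x powi n \<in> K"
  unfolding power_int_def by (auto intro: subfield_C_power subfield_C_inverse)

lemma subfield_C_sum: "subfield_C K \<Longrightarrow> (\<And>i. i \<in> I \<Longrightarrow> g i \<in> K) \<Longrightarrow> sum g I \<in> K"
  by (induction I rule: infinite_finite_induct) (auto intro: subfield_C_0 subfield_C_add)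

lemma subfield_C_of_nat: "subfield_C K \<Longrightarrow> of_nat n \<in> K"
  by (induction n) (auto intro: subfield_C_0 subfield_C_1 subfield_C_add)

lemma subfield_C_of_int: "subfield_C K \<Longrightarrow> of_int n \<in> K"
  by (cases n) (auto intro: subfield_C_of_nat subfield_C_uminus simp del: of_nat_Suc)

lemma subfield_C_Rats:
  assumes "subfield_C K" "q \<in> \<rat>"
  shows "q \<in> K"
proof -
  obtain a b where "q = of_int a / of_int b"
    using assms(2) Rats_cases' by metis
  then show ?thesis using assms(1) by (simp add: subfield_C_divide subfield_C_of_int)
qed

lemma number_field_subfield_C: "number_field K \<Longrightarrow> subfield_C K"
  unfolding number_field_def by auto

context
  fixes K f
  assumes K: "subfield_C K" and f: "nonarch_abs K f"
begin

lemma nonarch_abs_1: "f 1 = 1"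
proof -
  have "f 1 = f 1 * f 1" using nonarch_abs_mult[OF f, of 1 1] subfield_C_1[OF K] by simp
  moreover have "f 1 \<noteq> 0" using nonarch_abs_eq_0_iff[OF f subfield_C_1[OF K]] by simp
  ultimately show ?thesis by simp
qed

lemma nonarch_abs_inverse:
  assumes "x \<in> K"
  shows "f (inverse x) = inverse (f x)"
proof (cases "x = 0")
  case True
  then show ?thesis using nonarch_abs_eq_0_iff[OF f assms] by simp
next
  case False
  then have "f x * f (inverse x) = 1"
    using nonarch_abs_mult[OF f assms subfield_C_inverse[OF K assms]] nonarch_abs_1 by simp
  then show ?thesis by (simp add: inverse_unique)
qed

lemma nonarch_abs_divide: "x \<in> K \<Longrightarrow> y \<in> K \<Longrightarrow> f (x / y) = f x / f y"
  by (simp add: divide_inverse nonarch_abs_mult[OF f] nonarch_abs_inverse subfield_C_inverse[OF K])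

lemma nonarch_abs_power: "x \<in> K \<Longrightarrow> f (x ^ n) = f x ^ n"
  by (induction n) (simp_all add: nonarch_abs_1 nonarch_abs_mult[OF f] subfield_C_power[OF K])

lemma nonarch_abs_power_int: "x \<in> K \<Longrightarrow> f (x powi n) = f x powi n"
  by (simp add: power_int_def nonarch_abs_power nonarch_abs_inverse subfield_C_inverse[OF K])

lemma nonarch_abs_uminus: "x \<in> K \<Longrightarrow> f (- x) = f x"
proof -
  have m1: "-1 \<in> K" using subfield_C_uminus[OF K subfield_C_1[OF K]] .
  have "f (-1) * f (-1) = 1" using nonarch_abs_mult[OF f m1 m1] nonarch_abs_1 by simp
  then have "f (-1) = 1" using nonarch_abs_nonneg[OF f, of "-1"]
    by (metis abs_of_nonneg abs_square_eq_1 power2_eq_square)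
  then show "x \<in> K \<Longrightarrow> f (- x) = f x" using nonarch_abs_mult[OF f m1, of x] by simp
qed

lemma nonarch_abs_add_eq_if_less:
  assumes "x \<in> K" "y \<in> K" "f y < f x"
  shows "f (x + y) = f x"
proof -
  have "f (x + y) \<le> max (f x) (f y)" using nonarch_abs_add_le[OF f] assms by blast
  moreover have "f x \<le> max (f (x + y)) (f (- y))"
    using nonarch_abs_add_le[OF f subfield_C_add[OF K] subfield_C_uminus[OF K], of x y y] assms
    by simp
  ultimately show ?thesis using assms nonarch_abs_uminus by (auto simp: max_def split: if_splits)
qed

lemma nonarch_abs_sum_less:
  assumes "finite I" "0 < c" "\<And>i. i \<in> I \<Longrightarrow> g i \<in> K" "\<And>i. i \<in> I \<Longrightarrow> f (g i) < c"
  shows "f (sum g I) < c"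
  using assms
proof (induction I rule: finite_induct)
  case empty
  then show ?case using nonarch_abs_eq_0_iff[OF f subfield_C_0[OF K]] by simp
next
  case (insert i I)
  then have "f (g i + sum g I) \<le> max (f (g i)) (f (sum g I))"
    by (intro nonarch_abs_add_le[OF f] subfield_C_sum[OF K]) auto
  with insert show ?case by (simp add: le_less_trans)
qed

lemma nontrivial_abs_exists_gt_1:
  assumes "nontrivial_abs K f"
  obtains y where "y \<in> K" "1 < f y"
proof -
  obtain x where x: "x \<in> K" "x \<noteq> 0" "f x \<noteq> 1"
    using assms unfolding nontrivial_abs_def by auto
  have "0 < f x" using nonarch_abs_pos[OF f x(1,2)] .
  then have "1 < f x \<or> 1 < f (inverse x)"
    using x(3) nonarch_abs_inverse[OF x(1)] by (auto simp: one_less_inverse_iff)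
  then show ?thesis using that x(1) subfield_C_inverse[OF K x(1)] by blast
qed

end

section \<open>Restriction of absolute values and places above a place\<close>

lemma nonarch_abs_restrict:
  "nonarch_abs L f \<Longrightarrow> subfield_C K \<Longrightarrow> K \<subseteq> L \<Longrightarrow> nonarch_abs K (restrict_abs K f)"
  using subfield_C_add subfield_C_mult unfolding nonarch_abs_def restrict_abs_def subset_iff
  by (auto simp del: max_def)

lemma restrict_abs_restrict_abs: "K \<subseteq> L \<Longrightarrow> restrict_abs K (restrict_abs L f) = restrict_abs K f"
  unfolding restrict_abs_def by (rule ext) auto

lemma restrict_abs_id: "nonarch_abs K f \<Longrightarrow> restrict_abs K f = f"
  unfolding restrict_abs_def by (auto simp: nonarch_abs_outside)

lemma equiv_abs_restrict:
  "equiv_abs L f g \<Longrightarrow> K \<subseteq> L \<Longrightarrow> equiv_abs K (restrict_abs K f) (restrict_abs K g)"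
  unfolding equiv_abs_def restrict_abs_def by auto

lemma nontrivial_abs_restrict_mono:
  "nontrivial_abs K (restrict_abs K f) \<Longrightarrow> K \<subseteq> L \<Longrightarrow> nontrivial_abs L (restrict_abs L f)"
  unfolding nontrivial_abs_def restrict_abs_def by auto

lemma W_subset_places: "W L K v \<subseteq> nonarch_places L"
  unfolding W_def by auto

lemma W_same_field:
  assumes "v \<in> nonarch_places K"
  shows "W K K v = {v}"
proof -
  have restrict: "restrict_abs K g = g" if "g \<in> v" for g
    using restrict_abs_id place_memberD(1) assms that by blast
  obtain g where "g \<in> v" using place_nonempty[OF assms] .
  then have "v \<in> W K K v" using assms restrict unfolding W_def by auto
  moreover have "w = v" if "w \<in> W K K v" for w
  proof -
    from that obtain f where "w \<in> nonarch_places K" "f \<in> w" "restrict_abs K f \<in> v"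
      unfolding W_def by auto
    then show ?thesis
      using places_eq_if_common_member[OF _ assms] restrict_abs_id place_memberD(1) by metis
  qed
  ultimately show ?thesis by blast
qed

lemma W_exists_intermediate:
  assumes L: "subfield_C L" and "K \<subseteq> L" "L \<subseteq> M"
    and v: "v \<in> nonarch_places K" and u: "u \<in> W M K v"
  obtains w where "w \<in> W L K v" "u \<in> W M L w"
proof -
  obtain f where f: "u \<in> nonarch_places M" "f \<in> u" "restrict_abs K f \<in> v"
    using u unfolding W_def by auto
  define w where "w = abs_class L (restrict_abs L f)"
  have "nonarch_abs L (restrict_abs L f)"
    using nonarch_abs_restrict place_memberD(1)[OF f(1,2)] L \<open>L \<subseteq> M\<close> by blast
  moreover have "nontrivial_abs L (restrict_abs L f)"
    using nontrivial_abs_restrict_mono place_memberD(2)[OF v f(3)] \<open>K \<subseteq> L\<close> by blast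
  ultimately have "w \<in> nonarch_places L" "restrict_abs L f \<in> w"
    unfolding w_def by (auto intro: abs_class_in_nonarch_places self_in_abs_class)
  moreover have "restrict_abs K (restrict_abs L f) \<in> v"
    using f(3) restrict_abs_restrict_abs[OF \<open>K \<subseteq> L\<close>] by simp
  ultimately have "w \<in> W L K v" "u \<in> W M L w"
    using f unfolding W_def by auto
  then show ?thesis by (rule that)
qed

lemma W_trans:
  assumes K: "subfield_C K" and "K \<subseteq> L" "L \<subseteq> M" and v: "v \<in> nonarch_places K"
    and w: "w \<in> W L K v" and u: "u \<in> W M L w"
  shows "u \<in> W M K v"
proof -
  obtain f g where f: "u \<in> nonarch_places M" "f \<in> u" "restrict_abs L f \<in> w"
    and g: "w \<in> nonarch_places L" "g \<in> w" "restrict_abs K g \<in> v"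
    using u w unfolding W_def by auto
  have "equiv_abs L g (restrict_abs L f)"
    using place_eq_abs_class[OF g(1,2)] f(3) by (simp add: abs_class_def)
  then have "equiv_abs K (restrict_abs K g) (restrict_abs K f)"
    using equiv_abs_restrict[OF _ \<open>K \<subseteq> L\<close>] restrict_abs_restrict_abs[OF \<open>K \<subseteq> L\<close>] by metis
  moreover have "nonarch_abs K (restrict_abs K f)"
    using nonarch_abs_restrict place_memberD(1)[OF f(1,2)] K \<open>K \<subseteq> L\<close> \<open>L \<subseteq> M\<close> by blast
  ultimately have "restrict_abs K f \<in> v"
    using place_eq_abs_class[OF v g(3)] by (simp add: abs_class_def)
  then show ?thesis using f unfolding W_def by blast
qed

lemma W_tower:
  assumes "subfield_C K" "subfield_C L" "K \<subseteq> L" "L \<subseteq> M" "v \<in> nonarch_places K"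
  shows "W M K v = (\<Union>w\<in>W L K v. W M L w)"
proof (intro equalityI subsetI)
  fix u assume "u \<in> W M K v"
  then obtain w where "w \<in> W L K v" "u \<in> W M L w"
    by (rule W_exists_intermediate[OF assms(2-5)])
  then show "u \<in> (\<Union>w\<in>W L K v. W M L w)" by blast
next
  fix u assume "u \<in> (\<Union>w\<in>W L K v. W M L w)"
  then obtain w where "w \<in> W L K v" "u \<in> W M L w" by blast
  then show "u \<in> W M K v" by (rule W_trans[OF assms(1,3,4,5)])
qed

lemma W_disjoint:
  assumes "L \<subseteq> M" "w1 \<in> nonarch_places L" "w2 \<in> nonarch_places L"
    and "u \<in> W M L w1" "u \<in> W M L w2"
  shows "w1 = w2"
proof -
  obtain f1 f2 where f: "u \<in> nonarch_places M" "f1 \<in> u" "f2 \<in> u"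
    and w: "restrict_abs L f1 \<in> w1" "restrict_abs L f2 \<in> w2"
    using assms(4,5) unfolding W_def by auto
  have "equiv_abs L (restrict_abs L f2) (restrict_abs L f1)"
    using place_eq_abs_class[OF f(1,3)] f(2) equiv_abs_restrict[OF _ assms(1)]
    by (simp add: abs_class_def)
  then have "restrict_abs L f1 \<in> w2"
    using place_eq_abs_class[OF assms(3) w(2)] place_memberD(1)[OF assms(2) w(1)]
    by (simp add: abs_class_def)
  then show ?thesis using places_eq_if_common_member[OF assms(2,3) w(1)] by blast
qed

section \<open>Weak approximation\<close>

lemma eq_if_same_rational_cuts:
  fixes a b :: real
  assumes "\<And>r. r \<in> \<rat> \<Longrightarrow> a < r \<Longrightarrow> b < r" and "\<And>r. r \<in> \<rat> \<Longrightarrow> r < a \<Longrightarrow> r < b"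
  shows "a = b"
proof (rule ccontr)
  assume "a \<noteq> b"
  then consider "a < b" | "b < a" by linarith
  then show False
    by cases (use Rats_dense_in_real assms in \<open>meson less_asym\<close>)+
qed

lemma ln_abs_ratio_less_iff:
  fixes k m :: int
  assumes K: "subfield_C K" and f: "nonarch_abs K f"
    and x: "x \<in> K" "x \<noteq> 0" and y: "y \<in> K" "1 < f y" and "0 < k"
  defines "z \<equiv> x powi k * y powi (- m)"
  shows "ln (f x) / ln (f y) < of_int m / of_int k \<longleftrightarrow> f z < 1"
    and "of_int m / of_int k < ln (f x) / ln (f y) \<longleftrightarrow> 1 < f z"
proof -
  have "0 < f x" using nonarch_abs_pos[OF f x] .
  moreover have "0 < f y" using y(2) by simp
  moreover have "f z = f x powi k * f y powi (- m)"
    unfolding z_def using K f x y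
    by (simp add: nonarch_abs_mult subfield_C_power_int nonarch_abs_power_int)
  ultimately have "0 < f z" and "ln (f z) = of_int k * ln (f x) - of_int m * ln (f y)"
    by (simp_all add: ln_mult powr_real_of_int'[symmetric])
  moreover have "0 < ln (f y)" using y(2) by simp
  ultimately show "ln (f x) / ln (f y) < of_int m / of_int k \<longleftrightarrow> f z < 1"
    and "of_int m / of_int k < ln (f x) / ln (f y) \<longleftrightarrow> 1 < f z"
    using \<open>0 < k\<close> by (auto simp: field_simps simp flip: ln_less_zero_iff ln_gt_zero_iff)
qed

lemma equiv_abs_if_ln_proportional:
  assumes f: "nonarch_abs K f" and g: "nonarch_abs K g" and "0 < s"
    and ln_g: "\<And>x. x \<in> K \<Longrightarrow> x \<noteq> 0 \<Longrightarrow> ln (g x) = s * ln (f x)"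
  shows "equiv_abs K f g"
  unfolding equiv_abs_def
proof (intro exI[of _ s] conjI ballI)
  fix x assume "x \<in> K"
  show "g x = f x powr s"
  proof (cases "x = 0")
    case True
    then show ?thesis
      using nonarch_abs_eq_0_iff[OF f \<open>x \<in> K\<close>] nonarch_abs_eq_0_iff[OF g \<open>x \<in> K\<close>] by simp
  next
    case False
    then have "0 < f x" "0 < g x" using nonarch_abs_pos f g \<open>x \<in> K\<close> by auto
    then show ?thesis using ln_g[OF \<open>x \<in> K\<close> False] by (metis exp_ln powr_def less_irrefl)
  qed
qed (fact \<open>0 < s\<close>)

text \<open>Comparing \<open>f\<close> and \<open>g\<close> at the elements \<open>x powi k * y powi (- m)\<close> squeezes
  \<open>ln (f x) / ln (f y)\<close> and \<open>ln (g x) / ln (g y)\<close> between the same rationals \<open>m / k\<close>.\<close>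
lemma equiv_abs_if_less_1_imp_less_1:
  assumes K: "subfield_C K" and f: "nonarch_abs K f" "nontrivial_abs K f"
    and g: "nonarch_abs K g" and less_1: "\<And>z. z \<in> K \<Longrightarrow> f z < 1 \<Longrightarrow> g z < 1"
  shows "equiv_abs K f g"
proof -
  have greater_1: "1 < g z" if z: "z \<in> K" "1 < f z" for z
  proof -
    have "z \<noteq> 0" using z nonarch_abs_eq_0_iff[OF f(1)] by force
    have "f (inverse z) < 1"
      using nonarch_abs_inverse[OF K f(1)] z by (simp add: inverse_less_1_iff)
    then have "inverse (g z) < 1"
      using less_1 subfield_C_inverse[OF K] nonarch_abs_inverse[OF K g] z(1) by metis
    then show ?thesis using nonarch_abs_pos[OF g z(1) \<open>z \<noteq> 0\<close>] by (simp add: inverse_less_1_iff)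
  qed
  obtain y where y: "y \<in> K" "1 < f y" using nontrivial_abs_exists_gt_1[OF K f] .
  have "1 < g y" using greater_1 y by blast
  define s where "s = ln (g y) / ln (f y)"
  have "0 < s" unfolding s_def using y(2) \<open>1 < g y\<close> by simp
  have ln_g: "ln (g x) = s * ln (f x)" if x: "x \<in> K" "x \<noteq> 0" for x
  proof -
    have "ln (f x) / ln (f y) = ln (g x) / ln (g y)"
    proof (rule eq_if_same_rational_cuts)
      fix r :: real
      assume "r \<in> \<rat>"
      then obtain m k where "0 < k" and r: "r = of_int m / of_int k"
        using Rats_cases' by metis
      have z: "x powi k * y powi (- m) \<in> K"
        using K x y by (intro subfield_C_mult subfield_C_power_int)
      note f_iff = ln_abs_ratio_less_iff[OF K f(1) x y \<open>0 < k\<close>, of m]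
      note g_iff = ln_abs_ratio_less_iff[OF K g x y(1) \<open>1 < g y\<close> \<open>0 < k\<close>, of m]
      show "ln (f x) / ln (f y) < r \<Longrightarrow> ln (g x) / ln (g y) < r"
        using f_iff(1) g_iff(1) less_1 z r by simp
      show "r < ln (f x) / ln (f y) \<Longrightarrow> r < ln (g x) / ln (g y)"
        using f_iff(2) g_iff(2) greater_1 z r by simp
    qed
    then show ?thesis using y(2) \<open>1 < g y\<close> unfolding s_def by (simp add: field_simps)
  qed
  show ?thesis using equiv_abs_if_ln_proportional[OF f(1) g \<open>0 < s\<close> ln_g] .
qed

lemma inequivalent_abs_separating_element:
  assumes K: "subfield_C K" and f: "nonarch_abs K f" "nontrivial_abs K f"
    and g: "nonarch_abs K g" "nontrivial_abs K g" and "\<not> equiv_abs K f g"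
  obtains x where "x \<in> K" "1 < f x" "g x < 1"
proof -
  obtain z where z: "z \<in> K" "f z < 1" "1 \<le> g z"
    using equiv_abs_if_less_1_imp_less_1[OF K f g(1)] assms(6) by (meson not_less)
  obtain z' where z': "z' \<in> K" "g z' < 1" "1 \<le> f z'"
    using equiv_abs_if_less_1_imp_less_1[OF K g f(1)] assms(6) equiv_abs_sym[OF g(1)]
    by (meson not_less)
  have "z \<noteq> 0" using z nonarch_abs_eq_0_iff[OF g(1)] by force
  then have "0 < f z" using nonarch_abs_pos[OF f(1) z(1)] by blast
  show ?thesis
  proof (rule that[of "z' / z"])
    show "z' / z \<in> K" using K z z' by (simp add: subfield_C_divide)
    show "1 < f (z' / z)" using nonarch_abs_divide[OF K f(1) z'(1) z(1)] z z' \<open>0 < f z\<close> by simp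
    show "g (z' / z) < 1" using nonarch_abs_divide[OF K g(1) z'(1) z(1)] z z' by simp
  qed
qed

lemma nonarch_abs_power_div_1_plus_power:
  assumes K: "subfield_C K" and f: "nonarch_abs K f" and x: "x \<in> K" "f x \<noteq> 1" and "0 < r"
  shows "f (x ^ r / (1 + x ^ r)) = (if f x < 1 then f x ^ r else 1)"
proof -
  have xr: "x ^ r \<in> K" and one: "1 \<in> K" using K x by (simp_all add: subfield_C_power subfield_C_1)
  have "0 \<le> f x" using nonarch_abs_nonneg[OF f] .
  show ?thesis
  proof (cases "f x < 1")
    case True
    then have "f (x ^ r) < f 1"
      using \<open>0 \<le> f x\<close> \<open>0 < r\<close>
      by (simp add: nonarch_abs_power[OF K f x(1)] nonarch_abs_1[OF K f] power_less_one_iff)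
    then have "f (1 + x ^ r) = 1"
      using nonarch_abs_add_eq_if_less[OF K f one xr] nonarch_abs_1[OF K f] by simp
    then show ?thesis
      using True xr subfield_C_add[OF K one xr]
      by (simp add: nonarch_abs_divide[OF K f] nonarch_abs_power[OF K f x(1)])
  next
    case False
    then have "1 < f x" using x(2) by simp
    then have "f 1 < f (x ^ r)"
      using \<open>0 < r\<close> by (simp add: nonarch_abs_power[OF K f x(1)] nonarch_abs_1[OF K f])
    then have "f (1 + x ^ r) = f (x ^ r)"
      using nonarch_abs_add_eq_if_less[OF K f xr one] by (simp add: add.commute)
    moreover have "0 < f (x ^ r)" using \<open>f 1 < f (x ^ r)\<close> nonarch_abs_1[OF K f] by simp
    ultimately show ?thesis
      using False by (simp add: nonarch_abs_divide[OF K f] xr subfield_C_add[OF K one xr])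
  qed
qed

lemma exists_damping_factor:
  assumes K: "subfield_C K" and f: "nonarch_abs K f" and h: "nonarch_abs K h"
    and x: "x \<in> K" "1 < f x" and "0 < r"
  obtains u where "u \<in> K" "1 \<le> f u" "h u \<le> 1"
    "\<And>g. nonarch_abs K g \<Longrightarrow> g x < 1 \<Longrightarrow> g u = g x ^ r"
proof (cases "h x = 1")
  case True
  show ?thesis
  proof (rule that[of "x ^ r"])
    show "x ^ r \<in> K" using K x(1) by (rule subfield_C_power)
    show "1 \<le> f (x ^ r)" "h (x ^ r) \<le> 1"
      using x(2) True
      by (simp_all add: nonarch_abs_power[OF K f x(1)] nonarch_abs_power[OF K h x(1)])
    show "g (x ^ r) = g x ^ r" if "nonarch_abs K g" for g
      using nonarch_abs_power[OF K that x(1)] .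
  qed
next
  case False
  show ?thesis
  proof (rule that[of "x ^ r / (1 + x ^ r)"])
    show "x ^ r / (1 + x ^ r) \<in> K"
      using K x(1) by (intro subfield_C_divide subfield_C_add subfield_C_power subfield_C_1)
    show "1 \<le> f (x ^ r / (1 + x ^ r))" "h (x ^ r / (1 + x ^ r)) \<le> 1"
      using nonarch_abs_power_div_1_plus_power[OF K f x(1) _ \<open>0 < r\<close>]
        nonarch_abs_power_div_1_plus_power[OF K h x(1) False \<open>0 < r\<close>]
        x(2) nonarch_abs_nonneg[OF h, of x] \<open>0 < r\<close>
      by (auto simp: power_le_one)
    show "g (x ^ r / (1 + x ^ r)) = g x ^ r" if "nonarch_abs K g" "g x < 1" for g
      using nonarch_abs_power_div_1_plus_power[OF K that(1) x(1) _ \<open>0 < r\<close>] that(2) by simp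
  qed
qed

lemma exists_separating_element:
  assumes K: "subfield_C K" and f: "nonarch_abs K f" "nontrivial_abs K f" and "finite G"
    and G: "\<And>g. g \<in> G \<Longrightarrow> nonarch_abs K g \<and> nontrivial_abs K g \<and> \<not> equiv_abs K f g"
  shows "\<exists>x\<in>K. 1 < f x \<and> (\<forall>g\<in>G. g x < 1)"
  using \<open>finite G\<close> G
proof (induction G rule: finite_induct)
  case empty
  then show ?case using nontrivial_abs_exists_gt_1[OF K f] by blast
next
  case (insert h G)
  then obtain x where x: "x \<in> K" "1 < f x" "\<forall>g\<in>G. g x < 1" by blast
  obtain y where y: "y \<in> K" "1 < f y" "h y < 1"
    using inequivalent_abs_separating_element[OF K f] insert.prems by blast
  have G_abs: "\<And>g. g \<in> G \<Longrightarrow> nonarch_abs K g" and h: "nonarch_abs K h"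
    using insert.prems by auto
  have "\<forall>\<^sub>F r in sequentially. \<forall>g\<in>G. g x ^ r * g y < 1"
  proof (rule eventually_ball_finite[OF \<open>finite G\<close>], intro ballI)
    fix g assume "g \<in> G"
    then have "(\<lambda>r. g x ^ r * g y) \<longlonglongrightarrow> 0 * g y"
      using x(3) nonarch_abs_nonneg[OF G_abs] by (intro tendsto_mult LIMSEQ_power_zero) auto
    then show "\<forall>\<^sub>F r in sequentially. g x ^ r * g y < 1" by (intro order_tendstoD(2)) auto
  qed
  then obtain r where "0 < r" and r: "\<forall>g\<in>G. g x ^ r * g y < 1"
    using eventually_conj[OF eventually_gt_at_top[of 0]] eventually_sequentially
    by (metis (no_types, lifting) order_refl)
  obtain u where u: "u \<in> K" "1 \<le> f u" "h u \<le> 1"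
    and u_G: "\<And>g. nonarch_abs K g \<Longrightarrow> g x < 1 \<Longrightarrow> g u = g x ^ r"
    using exists_damping_factor[OF K f(1) h x(1,2) \<open>0 < r\<close>] by blast
  have "u * y \<in> K" using K u(1) y(1) by (rule subfield_C_mult)
  moreover have "1 < f (u * y)"
    using nonarch_abs_mult[OF f(1) u(1) y(1)] u(2) y(2) mult_le_cancel_right1[of "f y" "f u"]
    by linarith
  moreover have "h (u * y) < 1"
    using nonarch_abs_mult[OF h u(1) y(1)] u(3) y(3)
      mult_left_le_one_le[OF nonarch_abs_nonneg[OF h] nonarch_abs_nonneg[OF h], of u y]
    by linarith
  moreover have "\<forall>g\<in>G. g (u * y) < 1"
    using nonarch_abs_mult[OF G_abs u(1) y(1)] u_G[OF G_abs] x(3) r by simp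
  ultimately show ?case by blast
qed

section \<open>Finiteness of the set of places above a place\<close>

text \<open>In a vanishing combination, the summand with the largest coefficient dominates at the
  absolute value attached to its element.\<close>
lemma separated_elements_independent:
  assumes L: "subfield_C L" and "K \<subseteq> L" and "finite S" "S \<subseteq> L"
    and A: "\<And>s. s \<in> S \<Longrightarrow> nonarch_abs L (A s)"
    and agree: "\<And>s t x. s \<in> S \<Longrightarrow> t \<in> S \<Longrightarrow> x \<in> K \<Longrightarrow> A s x = A t x"
    and large: "\<And>s. s \<in> S \<Longrightarrow> 1 < A s s"
    and small: "\<And>s t. s \<in> S \<Longrightarrow> t \<in> S \<Longrightarrow> s \<noteq> t \<Longrightarrow> A s t < 1"
    and q: "\<And>s. s \<in> S \<Longrightarrow> q s \<in> K" and "(\<Sum>s\<in>S. q s * s) = 0"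
  shows "\<forall>s\<in>S. q s = 0"
proof (rule ccontr)
  assume "\<not> (\<forall>s\<in>S. q s = 0)"
  then obtain s1 where s1: "s1 \<in> S" "q s1 \<noteq> 0" by blast
  define M where "M = Max ((\<lambda>s. A s (q s)) ` S)"
  have "M \<in> (\<lambda>s. A s (q s)) ` S"
    unfolding M_def using \<open>finite S\<close> s1(1) by (intro Max_in) auto
  then obtain t where t: "t \<in> S" "A t (q t) = M" by auto
  have le_M: "A s (q s) \<le> M" if "s \<in> S" for s
    unfolding M_def using \<open>finite S\<close> that by simp
  have qL: "q s \<in> L" if "s \<in> S" for s using q that \<open>K \<subseteq> L\<close> by blast
  have "0 < A s1 (q s1)" using nonarch_abs_pos[OF A qL] s1 by blast
  then have "0 < M" using le_M[OF s1(1)] by linarith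
  have summand: "A t (q s * s) = A s (q s) * A t s" if "s \<in> S" for s
    using nonarch_abs_mult[OF A[OF t(1)] qL] agree[OF t(1) that q] that \<open>S \<subseteq> L\<close> by auto
  have "A t (q t * t) > M"
    using summand[OF t(1)] t large[OF t(1)] \<open>0 < M\<close> by simp
  moreover have "A t (\<Sum>s\<in>S - {t}. q s * s) < M"
  proof (rule nonarch_abs_sum_less[OF L A[OF t(1)]])
    fix s assume s: "s \<in> S - {t}"
    then have "A s (q s) * A t s \<le> M * A t s"
      using le_M nonarch_abs_nonneg[OF A[OF t(1)]] by (simp add: mult_right_mono)
    also have "\<dots> < M" using small[OF t(1), of s] s \<open>0 < M\<close> by auto
    finally show "A t (q s * s) < M" using summand s by simp
    show "q s * s \<in> L" using s qL \<open>S \<subseteq> L\<close> by (blast intro: subfield_C_mult[OF L])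
  qed (use \<open>finite S\<close> \<open>0 < M\<close> in auto)
  moreover have "(\<Sum>s\<in>S. q s * s) = q t * t + (\<Sum>s\<in>S - {t}. q s * s)"
    using \<open>finite S\<close> t(1) by (simp add: sum.remove)
  moreover have "q t * t \<in> L" "(\<Sum>s\<in>S - {t}. q s * s) \<in> L"
    using qL \<open>S \<subseteq> L\<close> t(1) by (auto intro!: subfield_C_mult[OF L] subfield_C_sum[OF L])
  ultimately have "A t (\<Sum>s\<in>S. q s * s) > M"
    using nonarch_abs_add_eq_if_less[OF L A[OF t(1)]] by fastforce
  then show False
    using \<open>(\<Sum>s\<in>S. q s * s) = 0\<close> \<open>0 < M\<close>
      nonarch_abs_eq_0_iff[OF A[OF t(1)] subfield_C_0[OF L]]
    by simp
qed

lemma W_normalized_member: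
  assumes f: "nonarch_abs K f" and w: "w \<in> W L K (abs_class K f)"
  obtains g where "g \<in> w" "\<And>x. x \<in> K \<Longrightarrow> g x = f x"
proof -
  obtain g where g: "w \<in> nonarch_places L" "g \<in> w" "restrict_abs K g \<in> abs_class K f"
    using w unfolding W_def by auto
  then obtain s where "0 < s" and s: "\<And>x. x \<in> K \<Longrightarrow> g x = f x powr s"
    unfolding abs_class_def equiv_abs_def restrict_abs_def by auto
  define g' where "g' = (\<lambda>x. g x powr (1 / s))"
  have "nonarch_abs L g'"
    unfolding g'_def using nonarch_abs_powr place_memberD(1)[OF g(1,2)] \<open>0 < s\<close> by simp
  moreover have "equiv_abs L g g'"
    unfolding equiv_abs_def g'_def using \<open>0 < s\<close> by (intro exI[of _ "1 / s"]) auto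
  ultimately have "g' \<in> w"
    using place_eq_abs_class[OF g(1,2)] by (simp add: abs_class_def)
  moreover have "g' x = f x" if "x \<in> K" for x
    unfolding g'_def using s[OF that] \<open>0 < s\<close> nonarch_abs_nonneg[OF f, of x]
    by (simp add: powr_powr)
  ultimately show ?thesis using that by blast
qed

lemma exists_separating_family:
  assumes L: "subfield_C L" and "finite P" and places: "P \<subseteq> nonarch_places L"
    and N: "\<And>w. w \<in> P \<Longrightarrow> N w \<in> w"
  obtains X where "\<And>w. w \<in> P \<Longrightarrow> X w \<in> L" "\<And>w. w \<in> P \<Longrightarrow> 1 < N w (X w)"
    "\<And>w w'. w \<in> P \<Longrightarrow> w' \<in> P \<Longrightarrow> w' \<noteq> w \<Longrightarrow> N w' (X w) < 1"
proof -
  have N_abs: "nonarch_abs L (N w)" "nontrivial_abs L (N w)" if "w \<in> P" for w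
    using place_memberD places N that by blast+
  have N_inequiv: "\<not> equiv_abs L (N w) (N w')" if "w \<in> P" "w' \<in> P" "w \<noteq> w'" for w w'
  proof
    assume "equiv_abs L (N w) (N w')"
    then have "N w' \<in> abs_class L (N w)"
      using N_abs(1)[OF that(2)] by (simp add: abs_class_def)
    then have "N w' \<in> w"
      using place_eq_abs_class[OF subsetD[OF places that(1)] N[OF that(1)]] by metis
    then show False
      using places_eq_if_common_member[OF subsetD[OF places that(1)] subsetD[OF places that(2)]]
        N[OF that(2)] that(3) by blast
  qed
  have "\<forall>w\<in>P. \<exists>x. x \<in> L \<and> 1 < N w x \<and> (\<forall>w'\<in>P - {w}. N w' x < 1)"
  proof
    fix w assume "w \<in> P"
    have G: "nonarch_abs L g \<and> nontrivial_abs L g \<and> \<not> equiv_abs L (N w) g"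
      if g: "g \<in> N ` (P - {w})" for g
    proof -
      obtain w' where "w' \<in> P" "w' \<noteq> w" "g = N w'" using g by auto
      then show ?thesis using N_abs N_inequiv[OF \<open>w \<in> P\<close>] by metis
    qed
    have "finite (N ` (P - {w}))" using \<open>finite P\<close> by simp
    then have "\<exists>x\<in>L. 1 < N w x \<and> (\<forall>g\<in>N ` (P - {w}). g x < 1)"
      using G by (rule exists_separating_element[OF L N_abs[OF \<open>w \<in> P\<close>]])
    then show "\<exists>x. x \<in> L \<and> 1 < N w x \<and> (\<forall>w'\<in>P - {w}. N w' x < 1)" by blast
  qed
  from bchoice[OF this] obtain X
    where "\<forall>w\<in>P. X w \<in> L \<and> 1 < N w (X w) \<and> (\<forall>w'\<in>P - {w}. N w' (X w) < 1)" ..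
  then show ?thesis by (intro that[of X]) auto
qed

interpretation rat_vs: vector_space "\<lambda>(r::rat) (z::complex). of_rat r * z"
  by unfold_locales (auto simp: algebra_simps of_rat_add of_rat_mult)

lemma card_le_if_separating_family:
  assumes L: "subfield_C L" and "finite P"
    and B: "finite B" "\<And>x. x \<in> L \<Longrightarrow> x \<in> rat_vs.span B"
    and N: "\<And>w. w \<in> P \<Longrightarrow> nonarch_abs L (N w)"
    and agree: "\<And>w w' x. w \<in> P \<Longrightarrow> w' \<in> P \<Longrightarrow> x \<in> \<rat> \<Longrightarrow> N w x = N w' x"
    and X: "\<And>w. w \<in> P \<Longrightarrow> X w \<in> L" "\<And>w. w \<in> P \<Longrightarrow> 1 < N w (X w)"
      "\<And>w w'. w \<in> P \<Longrightarrow> w' \<in> P \<Longrightarrow> w' \<noteq> w \<Longrightarrow> N w' (X w) < 1"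
  shows "card P \<le> card B"
proof -
  have "inj_on X P"
  proof (rule inj_onI, rule ccontr)
    fix w w' assume "w \<in> P" "w' \<in> P" "X w = X w'" "w \<noteq> w'"
    then show False using X(2)[of w] X(3)[of w' w] by simp
  qed
  define A where "A t = N (inv_into P X t)" for t
  have A: "A (X w) = N w" if "w \<in> P" for w
    unfolding A_def using \<open>inj_on X P\<close> that by simp
  have "rat_vs.independent (X ` P)"
  proof (rule rat_vs.independent_if_scalars_zero)
    fix u t
    assume sum: "(\<Sum>x\<in>X ` P. of_rat (u x) * x) = 0" and "t \<in> X ` P"
    have "\<forall>s\<in>X ` P. of_rat (u s) = (0::complex)"
    proof (rule separated_elements_independent[where K = \<rat> and A = A, OF L])
      show "\<rat> \<subseteq> L" using subfield_C_Rats[OF L] by blast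
      show "finite (X ` P)" "X ` P \<subseteq> L" using \<open>finite P\<close> X(1) by auto
      show "nonarch_abs L (A s)" "1 < A s s" if "s \<in> X ` P" for s
        using that A N X(2) by auto
      show "A s t < 1" if st: "s \<in> X ` P" "t \<in> X ` P" "s \<noteq> t" for s t
      proof -
        obtain w w' where "w \<in> P" "w' \<in> P" "s = X w" "t = X w'" "w \<noteq> w'"
          using st by blast
        then show ?thesis using A X(3) by simp
      qed
      show "A s x = A t x" if st: "s \<in> X ` P" "t \<in> X ` P" and "x \<in> \<rat>" for s t x
      proof -
        obtain w w' where "w \<in> P" "w' \<in> P" "s = X w" "t = X w'"
          using st by blast
        then show ?thesis using A agree[of w w' x] \<open>x \<in> \<rat>\<close> by simp
      qed
      show "of_rat (u s) \<in> \<rat>" for s by simp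
    qed (fact sum)
    then show "u t = 0" using \<open>t \<in> X ` P\<close> by auto
  qed (use \<open>finite P\<close> in simp)
  then have "card (X ` P) \<le> card B"
    using rat_vs.independent_span_bound[OF B(1)] B(2) X(1) by blast
  then show ?thesis using card_image[OF \<open>inj_on X P\<close>] by simp
qed

lemma card_W_le:
  assumes K: "subfield_C K" and L: "subfield_C L" and v: "v \<in> nonarch_places K"
    and B: "finite B" "\<And>x. x \<in> L \<Longrightarrow> x \<in> rat_vs.span B"
    and P: "finite P" "P \<subseteq> W L K v"
  shows "card P \<le> card B"
proof -
  obtain f where f: "nonarch_abs K f" "v = abs_class K f"
    using v by (rule nonarch_placesE)
  have "\<forall>w\<in>P. \<exists>g. g \<in> w \<and> (\<forall>x\<in>K. g x = f x)"
    using W_normalized_member[OF f(1)] P(2) f(2) by (metis subsetD)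
  then obtain N where N: "\<And>w. w \<in> P \<Longrightarrow> N w \<in> w"
    "\<And>w x. w \<in> P \<Longrightarrow> x \<in> K \<Longrightarrow> N w x = f x"
    by (metis bchoice)
  have places: "P \<subseteq> nonarch_places L" using P(2) W_subset_places by blast
  obtain X where X: "\<And>w. w \<in> P \<Longrightarrow> X w \<in> L" "\<And>w. w \<in> P \<Longrightarrow> 1 < N w (X w)"
    "\<And>w w'. w \<in> P \<Longrightarrow> w' \<in> P \<Longrightarrow> w' \<noteq> w \<Longrightarrow> N w' (X w) < 1"
    using exists_separating_family[OF L P(1) places N(1)] by blast
  have "nonarch_abs L (N w)" if "w \<in> P" for w
    using place_memberD(1) subsetD[OF places that] N(1)[OF that] by blast
  moreover have "N w x = N w' x" if "w \<in> P" "w' \<in> P" "x \<in> \<rat>" for w w' x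
    using N(2) subfield_C_Rats[OF K] that by simp
  ultimately show ?thesis
    using card_le_if_separating_family[of L P B N X, OF L P(1) B] X by blast
qed

lemma number_field_subset_span:
  assumes "number_field L"
  obtains B where "finite B" "\<And>x. x \<in> L \<Longrightarrow> x \<in> rat_vs.span B"
proof -
  obtain B where "finite B"
    and B: "\<And>x. x \<in> L \<Longrightarrow> \<exists>q. (\<forall>b\<in>B. q b \<in> \<rat>) \<and> x = (\<Sum>b\<in>B. q b * b)"
    using assms unfolding number_field_def by blast
  moreover have "x \<in> rat_vs.span B" if x: "x \<in> L" for x
  proof -
    obtain q where q: "\<forall>b\<in>B. q b \<in> \<rat>" "x = (\<Sum>b\<in>B. q b * b)" using B[OF x] by blast
    have "q b * b \<in> rat_vs.span B" if "b \<in> B" for b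
      using q(1) that rat_vs.span_scale[OF rat_vs.span_base[OF that]] by (auto elim!: Rats_cases)
    then show ?thesis unfolding q(2) by (rule rat_vs.span_sum)
  qed
  ultimately show ?thesis using that by blast
qed

lemma finite_W:
  assumes "subfield_C K" "number_field L" "v \<in> nonarch_places K"
  shows "finite (W L K v)"
proof (rule ccontr)
  obtain B where "finite B" "\<And>x. x \<in> L \<Longrightarrow> x \<in> rat_vs.span B"
    using number_field_subset_span[OF assms(2)] by blast
  assume "infinite (W L K v)"
  then obtain P where "P \<subseteq> W L K v" "finite P" "card P = Suc (card B)"
    using infinite_arbitrarily_large by blast
  then show False
    using card_W_le[OF assms(1) number_field_subfield_C[OF assms(2)] assms(3)] \<open>finite B\<close>
      \<open>\<And>x. x \<in> L \<Longrightarrow> x \<in> rat_vs.span B\<close> by fastforce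
qed

lemma sum_W_tower:
  assumes K: "subfield_C K" and L: "number_field L" and M: "number_field M"
    and "K \<subseteq> L" "L \<subseteq> M" and v: "v \<in> nonarch_places K"
  shows "(\<Sum>u\<in>W M K v. \<phi> u) = (\<Sum>w\<in>W L K v. \<Sum>u\<in>W M L w. \<phi> u)"
proof -
  have "subfield_C L" using L by (rule number_field_subfield_C)
  have "finite (W L K v)" using finite_W[OF K L v] .
  moreover have "\<forall>w\<in>W L K v. finite (W M L w)"
    using finite_W[OF \<open>subfield_C L\<close> M] W_subset_places by blast
  moreover have "\<forall>w1\<in>W L K v. \<forall>w2\<in>W L K v. w1 \<noteq> w2 \<longrightarrow> W M L w1 \<inter> W M L w2 = {}"
    using W_disjoint[OF \<open>L \<subseteq> M\<close>] W_subset_places by blast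
  ultimately show ?thesis
    unfolding W_tower[OF K \<open>subfield_C L\<close> \<open>K \<subseteq> L\<close> \<open>L \<subseteq> M\<close> v] by (rule sum.UNION_disjoint)
qed

section \<open>Consistent maps determined along a tower\<close>

lemma finite_subset_chain_member:
  assumes mono: "\<And>i. K i \<subseteq> K (Suc i)" and "finite B" "B \<subseteq> (\<Union>i. K i)"
  shows "\<exists>i. B \<subseteq> K i"
  using \<open>finite B\<close> \<open>B \<subseteq> (\<Union>i. K i)\<close>
proof (induction B rule: finite_induct)
  case (insert b B)
  then obtain i j where "B \<subseteq> K i" "b \<in> K j" by blast
  moreover have "K i \<subseteq> K (max i j)" "K j \<subseteq> K (max i j)"
    using lift_Suc_mono_le[of K, OF mono] by simp_all
  ultimately show ?case by blast
qed simp

locale number_field_tower =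
  fixes K :: "nat \<Rightarrow> complex set"
  assumes number_field_K: "\<And>i. number_field (K i)"
    and mono: "\<And>i. K i \<subseteq> K (Suc i)"
    and union: "(\<Union>i. K i) = Qbar"
begin

lemma K_mono: "i \<le> j \<Longrightarrow> K i \<subseteq> K j"
  using lift_Suc_mono_le[of K, OF mono] .

lemma subfield_C_K: "subfield_C (K i)"
  using number_field_K by (rule number_field_subfield_C)

lemma exists_K_superset:
  assumes "number_field L"
  obtains i where "L \<subseteq> K i"
proof -
  obtain B where B: "finite B" "B \<subseteq> L"
    "\<And>x. x \<in> L \<Longrightarrow> \<exists>q. (\<forall>b\<in>B. q b \<in> \<rat>) \<and> x = (\<Sum>b\<in>B. q b * b)"
    using assms unfolding number_field_def by blast
  moreover have "B \<subseteq> (\<Union>i. K i)" using B(2) assms union unfolding number_field_def by blast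
  ultimately obtain i where "B \<subseteq> K i" using finite_subset_chain_member[of K, OF mono] by blast
  have "L \<subseteq> K i"
  proof
    fix x assume "x \<in> L"
    then obtain q where q: "\<forall>b\<in>B. q b \<in> \<rat>" "x = (\<Sum>b\<in>B. q b * b)" using B(3) by blast
    show "x \<in> K i"
      unfolding q(2) using subfield_C_K q(1) \<open>B \<subseteq> K i\<close>
      by (blast intro: subfield_C_sum subfield_C_mult subfield_C_Rats)
  qed
  then show ?thesis by (rule that)
qed

end

locale compatible_place_data = number_field_tower +
  fixes d :: "nat \<Rightarrow> (complex \<Rightarrow> real) set \<Rightarrow> rat"
  assumes compatible: "\<And>i v. v \<in> nonarch_places (K i) \<Longrightarrow>
    d i v = (\<Sum>w\<in>W (K (Suc i)) (K i) v. d (Suc i) w)"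
begin

definition d_above :: "nat \<Rightarrow> complex set \<Rightarrow> (complex \<Rightarrow> real) set \<Rightarrow> rat" where
  "d_above i L w = (\<Sum>u\<in>W (K i) L w. d i u)"

definition c :: "complex set \<Rightarrow> (complex \<Rightarrow> real) set \<Rightarrow> rat" where
  "c L w = d_above (SOME i. L \<subseteq> K i) L w"

lemma d_above_tower:
  assumes "number_field L" "L \<subseteq> K i" "i \<le> j" "w \<in> nonarch_places L"
  shows "d_above j L w = (\<Sum>u\<in>W (K i) L w. d_above j (K i) u)"
  unfolding d_above_def
  using sum_W_tower[OF number_field_subfield_C number_field_K number_field_K] assms K_mono by blast

lemma d_eq_d_above:
  assumes "i \<le> j" and v: "v \<in> nonarch_places (K i)"
  shows "d i v = d_above j (K i) v"
  using \<open>i \<le> j\<close>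
proof (induction j rule: dec_induct)
  case base
  then show ?case unfolding d_above_def using W_same_field[OF v] by simp
next
  case (step j)
  have "d_above (Suc j) (K i) v = (\<Sum>w\<in>W (K j) (K i) v. d_above (Suc j) (K j) w)"
    using d_above_tower[OF number_field_K K_mono[OF step.hyps(1)] _ v, of "Suc j"] by simp
  also have "\<dots> = d_above j (K i) v"
    unfolding d_above_def[of j] using compatible W_subset_places[THEN subsetD]
    by (intro sum.cong) (auto simp: d_above_def)
  finally show ?case using step.IH by simp
qed

lemma d_above_independent:
  assumes L: "number_field L" "L \<subseteq> K i" "L \<subseteq> K j" and w: "w \<in> nonarch_places L"
  shows "d_above i L w = d_above j L w"
proof -
  have "d_above i L w = d_above k L w" if "L \<subseteq> K i" "i \<le> k" for i k
  proof -
    have "d_above k L w = (\<Sum>u\<in>W (K i) L w. d_above k (K i) u)"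
      using d_above_tower[OF L(1) that w] .
    also have "\<dots> = d_above i L w"
      unfolding d_above_def[of i] using d_eq_d_above[OF \<open>i \<le> k\<close>] W_subset_places[THEN subsetD]
      by (intro sum.cong) auto
    finally show ?thesis by simp
  qed
  from this[of i "max i j"] this[of j "max i j"] show ?thesis using L by simp
qed

lemma c_eq_d_above:
  assumes "number_field L" "L \<subseteq> K i" "w \<in> nonarch_places L"
  shows "c L w = d_above i L w"
proof -
  have "L \<subseteq> K (SOME i. L \<subseteq> K i)"
    using exists_K_superset[OF assms(1)] by (metis someI)
  then show ?thesis unfolding c_def using d_above_independent assms by blast
qed

lemma c_K: "v \<in> nonarch_places (K i) \<Longrightarrow> c (K i) v = d i v"
  using c_eq_d_above[OF number_field_K order_refl] d_eq_d_above[OF order_refl] by simp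

lemma consistent_c: "consistent c"
  unfolding consistent_def
proof (intro allI impI)
  fix K0 L v
  assume "number_field K0" "number_field L" "K0 \<subseteq> L" and v: "v \<in> nonarch_places K0"
  obtain i where "L \<subseteq> K i" using exists_K_superset[OF \<open>number_field L\<close>] .
  have "c K0 v = d_above i K0 v"
    using c_eq_d_above \<open>number_field K0\<close> \<open>K0 \<subseteq> L\<close> \<open>L \<subseteq> K i\<close> v by blast
  also have "\<dots> = (\<Sum>w\<in>W L K0 v. d_above i L w)"
    unfolding d_above_def
    using sum_W_tower[OF number_field_subfield_C] \<open>number_field K0\<close> \<open>number_field L\<close>
      number_field_K \<open>K0 \<subseteq> L\<close> \<open>L \<subseteq> K i\<close> v by blast
  also have "\<dots> = (\<Sum>w\<in>W L K0 v. c L w)"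
    using c_eq_d_above[OF \<open>number_field L\<close> \<open>L \<subseteq> K i\<close>] W_subset_places[THEN subsetD]
    by (intro sum.cong) auto
  finally show "c K0 v = (\<Sum>w\<in>W L K0 v. c L w)" .
qed

lemma consistent_eq_c:
  assumes "consistent c'" "\<And>i v. v \<in> nonarch_places (K i) \<Longrightarrow> c' (K i) v = d i v"
    and "(L, w) \<in> J"
  shows "c' L w = c L w"
proof -
  have L: "number_field L" "w \<in> nonarch_places L" using \<open>(L, w) \<in> J\<close> unfolding J_def by auto
  obtain i where "L \<subseteq> K i" using exists_K_superset[OF L(1)] .
  have "c' L w = (\<Sum>u\<in>W (K i) L w. c' (K i) u)"
    using \<open>consistent c'\<close> L number_field_K \<open>L \<subseteq> K i\<close> unfolding consistent_def by blast
  also have "\<dots> = d_above i L w"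
    unfolding d_above_def using assms(2) W_subset_places[THEN subsetD] by (intro sum.cong) auto
  also have "\<dots> = c L w" using c_eq_d_above[OF L(1) \<open>L \<subseteq> K i\<close> L(2)] by simp
  finally show ?thesis .
qed

end

theorem lemma4p2:
  fixes K :: "nat \<Rightarrow> complex set"
    and d :: "nat \<Rightarrow> (complex \<Rightarrow> real) set \<Rightarrow> rat"
  assumes nf: "\<And>i. number_field (K i)"
    and mono: "\<And>i. K i \<subseteq> K (Suc i)"
    and union: "(\<Union>i. K i) = Qbar"
    and compat: "\<And>i v. v \<in> nonarch_places (K i) \<Longrightarrow>
                   d i v = (\<Sum>w\<in>W (K (Suc i)) (K i) v. d (Suc i) w)"
  shows "\<exists>c. consistent c \<and>
           (\<forall>i. \<forall>v\<in>nonarch_places (K i). c (K i) v = d i v) \<and>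
           (\<forall>c'. consistent c' \<and> (\<forall>i. \<forall>v\<in>nonarch_places (K i). c' (K i) v = d i v)
                 \<longrightarrow> (\<forall>(L, w)\<in>J. c' L w = c L w))"
proof -
  interpret compatible_place_data K d
    using assms by unfold_locales
  show ?thesis
    using consistent_c c_K consistent_eq_c by blast
qed

end
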